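(* Let $(X,\tau)$ be a topological accessibility space. Then: (a) if $\tau$ is sequential, it is Fréchet; (b) if $\tau$ has countable $\mathrm{S}_0$-character (i.e., a weak base $(\mathcal{B}_x)_{x\in X}$ with each $\mathcal{B}_x$ countable), then $\tau$ has countable character (is first-countable); (c) if $\tau$ is symmetrizable, then it is semi-metrizable.
   Context: A topological space $(X,\tau)$ is an accessibility space if for each $x_0\in X$ and every $H\subset X$ with $x_0\in\mathrm{cl}(H\setminus\{x_0\})$, there is a closed set $F$ with $x_0\in\mathrm{cl}(F\setminus\{x_0\})$ and $x_0\notin\mathrm{cl}(F\setminus H\setminus\{x_0\})$. Sequential: every sequentially closed set (containing all limits of sequences in it) is closed. Fréchet: whenever $x\in\mathrm{cl}A$, some sequence in $A$ converges to $x$. A weak base is a family $(\mathcal{B}_x)_{x\in X}$ of filter-bases with $x\in\bigcap\mathcal{B}_x$ such that $U$ is open iff for every $x\in U$ some $V\in\mathcal{B}_x$ satisfies $V\subset U$. A semi-metric is $d:X\times X\to[0,\infty)$ symmetric with $d(x,y)=0\iff x=y$, with balls $B(x,\epsilon)=\{y:d(x,y)<\epsilon\}$. $\tau$ is symmetrizable if for some semi-metric $d$, $O$ is open iff for every $x\in O$ some $B(x,\epsilon)\subset O$; $\tau$ is semi-metrizable if for some semi-metric $d$, $x\in\mathrm{cl}A\iff\inf_{a\in A}d(x,a)=0$ for all $x,A$. *)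

theory Defs
  imports "HOL-Analysis.Analysis"
begin

definition accessibility_space :: "'a topology \<Rightarrow> bool" where
  "accessibility_space X \<longleftrightarrow>
     (\<forall>x0 \<in> topspace X. \<forall>H. H \<subseteq> topspace X \<longrightarrow> x0 \<in> X closure_of (H - {x0}) \<longrightarrow>
        (\<exists>F. closedin X F \<and> x0 \<in> X closure_of (F - {x0}) \<and>
             x0 \<notin> X closure_of (F - H - {x0})))"

definition sequentially_closedin :: "'a topology \<Rightarrow> 'a set \<Rightarrow> bool" where
  "sequentially_closedin X A \<longleftrightarrow>
     (\<forall>\<sigma> x. (\<forall>n. \<sigma> n \<in> A) \<and> limitin X \<sigma> x sequentially \<longrightarrow> x \<in> A)"

definition sequential_space :: "'a topology \<Rightarrow> bool" where
  "sequential_space X \<longleftrightarrow>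
     (\<forall>A. A \<subseteq> topspace X \<and> sequentially_closedin X A \<longrightarrow> closedin X A)"

definition frechet_space :: "'a topology \<Rightarrow> bool" where
  "frechet_space X \<longleftrightarrow>
     (\<forall>A x. A \<subseteq> topspace X \<and> x \<in> X closure_of A \<longrightarrow>
        (\<exists>\<sigma>. (\<forall>n. \<sigma> n \<in> A) \<and> limitin X \<sigma> x sequentially))"

definition filter_base :: "'a set set \<Rightarrow> bool" where
  "filter_base \<B> \<longleftrightarrow> \<B> \<noteq> {} \<and>
     (\<forall>V1 \<in> \<B>. \<forall>V2 \<in> \<B>. \<exists>V3 \<in> \<B>. V3 \<subseteq> V1 \<inter> V2)"

definition weak_base :: "'a topology \<Rightarrow> ('a \<Rightarrow> 'a set set) \<Rightarrow> bool" where
  "weak_base X \<B> \<longleftrightarrow>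
     (\<forall>x \<in> topspace X. filter_base (\<B> x) \<and> (\<forall>V \<in> \<B> x. x \<in> V \<and> V \<subseteq> topspace X)) \<and>
     (\<forall>U. U \<subseteq> topspace X \<longrightarrow>
        (openin X U \<longleftrightarrow> (\<forall>x \<in> U. \<exists>V \<in> \<B> x. V \<subseteq> U)))"

definition countable_S0_character :: "'a topology \<Rightarrow> bool" where
  "countable_S0_character X \<longleftrightarrow>
     (\<exists>\<B>. weak_base X \<B> \<and> (\<forall>x \<in> topspace X. countable (\<B> x)))"

definition semimetric_on :: "'a set \<Rightarrow> ('a \<Rightarrow> 'a \<Rightarrow> real) \<Rightarrow> bool" where
  "semimetric_on S d \<longleftrightarrow>
     (\<forall>x \<in> S. \<forall>y \<in> S. d x y \<ge> 0 \<and> d x y = d y x \<and> (d x y = 0 \<longleftrightarrow> x = y))"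

definition sball :: "'a set \<Rightarrow> ('a \<Rightarrow> 'a \<Rightarrow> real) \<Rightarrow> 'a \<Rightarrow> real \<Rightarrow> 'a set" where
  "sball S d x \<epsilon> = {y \<in> S. d x y < \<epsilon>}"

definition symmetrizable :: "'a topology \<Rightarrow> bool" where
  "symmetrizable X \<longleftrightarrow>
     (\<exists>d. semimetric_on (topspace X) d \<and>
        (\<forall>W. W \<subseteq> topspace X \<longrightarrow>
           (openin X W \<longleftrightarrow> (\<forall>x \<in> W. \<exists>\<epsilon>>0. sball (topspace X) d x \<epsilon> \<subseteq> W))))"

text \<open>inf over a in A of d x a = 0, written without Inf (no issue for empty A).\<close>
definition semimetrizable :: "'a topology \<Rightarrow> bool" where
  "semimetrizable X \<longleftrightarrow>
     (\<exists>d. semimetric_on (topspace X) d \<and>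
        (\<forall>x \<in> topspace X. \<forall>A. A \<subseteq> topspace X \<longrightarrow>
           (x \<in> X closure_of A \<longleftrightarrow> (\<forall>\<epsilon>>0. \<exists>a \<in> A. d x a < \<epsilon>))))"

end

theory Submission
  imports Defs
begin

text \<open>
  In an accessibility space every point x adherent to a set H comes with a closed set F such that
  F - {x} accumulates at x but, near x, lies inside H. Two consequences drive all three statements.
  First, in a sequential space the non-closed set F - {x} is the range of a sequence converging to x,
  which then eventually runs inside H; so sequential spaces are Fr\'echet. Second, every member V of a
  weak base at x is a neighbourhood of x: otherwise, taking H to be the complement of V, a member of
  the weak base at x avoids F - {x}, which makes the complement of F - {x} open and F - {x} closed,
  absurd. Hence a weak base is a neighbourhood base, which gives first countability from a countable
  weak base and, applied to the balls of a symmetric, the closure characterisation of a semi-metric.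
\<close>

lemma accessibility_spaceE:
  assumes "accessibility_space X" and "x \<in> X closure_of (H - {x})"
  obtains F U where "closedin X F" "x \<in> X closure_of (F - {x})"
    "openin X U" "x \<in> U" "U \<inter> (F - {x}) \<subseteq> H"
proof -
  have x: "x \<in> topspace X"
    using assms(2) in_closure_of by fast
  have "x \<in> X closure_of (topspace X \<inter> H - {x})"
    using assms(2) closure_of_restrict[of X "H - {x}"] by (simp add: Int_Diff)
  then obtain F where F: "closedin X F" "x \<in> X closure_of (F - {x})"
    and far: "x \<notin> X closure_of (F - (topspace X \<inter> H) - {x})"
    using assms(1) x unfolding accessibility_space_def by blast
  let ?U = "topspace X - X closure_of (F - (topspace X \<inter> H) - {x})"
  have "F - (topspace X \<inter> H) - {x} \<subseteq> X closure_of (F - (topspace X \<inter> H) - {x})"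
    using closedin_subset[OF F(1)] by (intro closure_of_subset) auto
  then have "?U \<inter> (F - {x}) \<subseteq> H"
    by blast
  with F far x show thesis
    by (intro that[of F ?U]) auto
qed

lemma closure_of_punctured_not_closedin:
  assumes "x \<in> X closure_of (F - {x})"
  shows "\<not> closedin X (F - {x})"
  using assms closure_of_closedin by fastforce

lemma sequential_space_limitin_punctured:
  assumes seq: "sequential_space X" and F: "closedin X F" "x \<in> X closure_of (F - {x})"
  obtains \<sigma> where "\<forall>n. \<sigma> n \<in> F - {x}" "limitin X \<sigma> x sequentially"
proof -
  have "F - {x} \<subseteq> topspace X"
    using closedin_subset[OF F(1)] by blast
  moreover have "\<not> closedin X (F - {x})"
    using F(2) by (rule closure_of_punctured_not_closedin)
  ultimately have "\<not> sequentially_closedin X (F - {x})"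
    using seq unfolding sequential_space_def by blast
  then obtain \<sigma> y where \<sigma>: "\<forall>n. \<sigma> n \<in> F - {x}" "limitin X \<sigma> y sequentially"
    and y: "y \<notin> F - {x}"
    unfolding sequentially_closedin_def by blast
  have "y \<in> F"
    using limitin_closedin[OF \<sigma>(2) F(1)] \<sigma>(1) by simp
  with y have "y = x"
    by blast
  with \<sigma> show thesis
    by (intro that) simp_all
qed

theorem accessibility_sequential_imp_frechet:
  assumes acc: "accessibility_space X" and seq: "sequential_space X"
  shows "frechet_space X"
  unfolding frechet_space_def
proof (intro allI impI, elim conjE)
  fix A x assume "A \<subseteq> topspace X" and x_cl: "x \<in> X closure_of A"
  show "\<exists>\<sigma>. (\<forall>n. \<sigma> n \<in> A) \<and> limitin X \<sigma> x sequentially"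
  proof (cases "x \<in> A")
    case True
    then show ?thesis
      using \<open>A \<subseteq> topspace X\<close> by (intro exI[of _ "\<lambda>n. x"]) auto
  next
    case False
    then have "x \<in> X closure_of (A - {x})"
      using x_cl by (simp add: Diff_triv)
    then obtain F U where F: "closedin X F" "x \<in> X closure_of (F - {x})"
      and U: "openin X U" "x \<in> U" "U \<inter> (F - {x}) \<subseteq> A"
      by (rule accessibility_spaceE[OF acc])
    obtain \<sigma> where \<sigma>: "\<forall>n. \<sigma> n \<in> F - {x}" "limitin X \<sigma> x sequentially"
      using sequential_space_limitin_punctured[OF seq F] .
    obtain N where "\<forall>n\<ge>N. \<sigma> n \<in> U"
      using \<sigma>(2) U unfolding limitin_sequentially by blast
    then have "\<forall>n. \<sigma> (n + N) \<in> A"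
      using \<sigma>(1) U(3) by auto
    moreover have "limitin X (\<lambda>n. \<sigma> (n + N)) x sequentially"
      using \<sigma>(2) by (rule limitin_sequentially_offset)
    ultimately show ?thesis
      by (intro exI[of _ "\<lambda>n. \<sigma> (n + N)"]) simp
  qed
qed

lemma weak_base_openinD:
  assumes "weak_base X \<B>" "openin X U" "x \<in> U"
  obtains V where "V \<in> \<B> x" "V \<subseteq> U"
proof -
  have "\<forall>y \<in> U. \<exists>V \<in> \<B> y. V \<subseteq> U"
    using assms(1,2) openin_subset[OF assms(2)] unfolding weak_base_def by blast
  with assms(3) that show thesis
    by blast
qed

lemma weak_base_openinI:
  assumes "weak_base X \<B>" "U \<subseteq> topspace X" "\<And>x. x \<in> U \<Longrightarrow> \<exists>V \<in> \<B> x. V \<subseteq> U"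
  shows "openin X U"
  using assms unfolding weak_base_def by blast

lemma weak_base_memberD:
  assumes "weak_base X \<B>" "x \<in> topspace X" "V \<in> \<B> x"
  shows "x \<in> V" "V \<subseteq> topspace X"
  using assms unfolding weak_base_def by auto

lemma accessibility_weak_base_in_interior:
  assumes acc: "accessibility_space X" and wb: "weak_base X \<B>"
    and x: "x \<in> topspace X" and V: "V \<in> \<B> x"
  shows "x \<in> X interior_of V"
proof (rule ccontr)
  assume "x \<notin> X interior_of V"
  then have "x \<in> X closure_of ((topspace X - V) - {x})"
    using x weak_base_memberD(1)[OF wb x V] by (simp add: interior_of_closure_of Diff_triv)
  then obtain F U where F: "closedin X F" "x \<in> X closure_of (F - {x})"
    and U: "openin X U" "x \<in> U" "U \<inter> (F - {x}) \<subseteq> topspace X - V"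
    by (rule accessibility_spaceE[OF acc])
  obtain V1 where V1: "V1 \<in> \<B> x" "V1 \<subseteq> U"
    using wb U(1,2) by (rule weak_base_openinD)
  have "filter_base (\<B> x)"
    using wb x unfolding weak_base_def by blast
  then obtain V0 where V0: "V0 \<in> \<B> x" "V0 \<subseteq> V \<inter> V1"
    using V V1(1) unfolding filter_base_def by blast
  have "openin X (topspace X - (F - {x}))"
  proof (rule weak_base_openinI[OF wb])
    fix y assume y: "y \<in> topspace X - (F - {x})"
    show "\<exists>W \<in> \<B> y. W \<subseteq> topspace X - (F - {x})"
    proof (cases "y = x")
      case True
      have "V0 \<inter> (F - {x}) = {}"
        using V0(2) V1(2) U(3) by blast
      then show ?thesis
        using True V0(1) weak_base_memberD(2)[OF wb x V0(1)] by blast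
    next
      case False
      have "openin X (topspace X - F)" "y \<in> topspace X - F"
        using F(1) y False by auto
      then obtain W where "W \<in> \<B> y" "W \<subseteq> topspace X - F"
        by (rule weak_base_openinD[OF wb])
      then show ?thesis
        by blast
    qed
  qed auto
  moreover have "F - {x} \<subseteq> topspace X"
    using closedin_subset[OF F(1)] by blast
  ultimately have "closedin X (F - {x})"
    unfolding closedin_def by (intro conjI)
  with closure_of_punctured_not_closedin[OF F(2)] show False
    by contradiction
qed

lemma accessibility_weak_base_closure_of:
  assumes acc: "accessibility_space X" and wb: "weak_base X \<B>" and x: "x \<in> topspace X"
  shows "x \<in> X closure_of A \<longleftrightarrow> (\<forall>V \<in> \<B> x. V \<inter> A \<noteq> {})"
proof
  assume x_cl: "x \<in> X closure_of A"
  show "\<forall>V \<in> \<B> x. V \<inter> A \<noteq> {}"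
  proof
    fix V assume "V \<in> \<B> x"
    then have "x \<in> X interior_of V"
      by (rule accessibility_weak_base_in_interior[OF acc wb x])
    moreover have "openin X (X interior_of V)"
      by simp
    ultimately obtain a where "a \<in> A" "a \<in> X interior_of V"
      using x_cl by (meson in_closure_of)
    then show "V \<inter> A \<noteq> {}"
      using interior_of_subset[of X V] by blast
  qed
next
  assume meets: "\<forall>V \<in> \<B> x. V \<inter> A \<noteq> {}"
  have "\<exists>y. y \<in> A \<and> y \<in> T" if T: "openin X T" "x \<in> T" for T
  proof -
    obtain V where "V \<in> \<B> x" "V \<subseteq> T"
      using weak_base_openinD[OF wb T] .
    then show ?thesis
      using meets by blast
  qed
  with x show "x \<in> X closure_of A"
    unfolding in_closure_of by blast
qed

theorem accessibility_countable_S0_character_imp_first_countable: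
  assumes acc: "accessibility_space X" and "countable_S0_character X"
  shows "first_countable X"
proof -
  obtain \<B> where wb: "weak_base X \<B>" and countable: "\<forall>x \<in> topspace X. countable (\<B> x)"
    using assms(2) unfolding countable_S0_character_def by blast
  show ?thesis
    unfolding first_countable_def
  proof
    fix x assume x: "x \<in> topspace X"
    let ?\<N> = "(\<lambda>V. X interior_of V) ` \<B> x"
    have "countable ?\<N>"
      using countable x by simp
    moreover have "\<forall>W \<in> ?\<N>. openin X W"
      by simp
    moreover have "\<forall>U. openin X U \<and> x \<in> U \<longrightarrow> (\<exists>W \<in> ?\<N>. x \<in> W \<and> W \<subseteq> U)"
    proof (intro allI impI, elim conjE)
      fix U assume U: "openin X U" "x \<in> U"
      obtain V where V: "V \<in> \<B> x" "V \<subseteq> U"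
        using weak_base_openinD[OF wb U] .
      have "X interior_of V \<in> ?\<N>"
        using V(1) by (rule imageI)
      moreover have "x \<in> X interior_of V"
        using accessibility_weak_base_in_interior[OF acc wb x V(1)] .
      moreover have "X interior_of V \<subseteq> U"
        using interior_of_subset V(2) by (rule order_trans)
      ultimately show "\<exists>W \<in> ?\<N>. x \<in> W \<and> W \<subseteq> U"
        by blast
    qed
    ultimately show "\<exists>\<N>. countable \<N> \<and> (\<forall>W \<in> \<N>. openin X W) \<and>
                 (\<forall>U. openin X U \<and> x \<in> U \<longrightarrow> (\<exists>W \<in> \<N>. x \<in> W \<and> W \<subseteq> U))"
      by (intro exI[of _ ?\<N>] conjI)
  qed
qed

lemma symmetrizable_balls_weak_base:
  assumes d: "semimetric_on (topspace X) d"
    and open_iff: "\<forall>W. W \<subseteq> topspace X \<longrightarrow>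
           (openin X W \<longleftrightarrow> (\<forall>x \<in> W. \<exists>\<epsilon>>0. sball (topspace X) d x \<epsilon> \<subseteq> W))"
  shows "weak_base X (\<lambda>x. {sball (topspace X) d x \<epsilon> | \<epsilon>. \<epsilon> > 0})"
  unfolding weak_base_def
proof (intro conjI ballI allI impI)
  fix x assume x: "x \<in> topspace X"
  show "filter_base {sball (topspace X) d x \<epsilon> | \<epsilon>. \<epsilon> > 0}"
    unfolding filter_base_def
  proof (intro conjI ballI)
    show "{sball (topspace X) d x \<epsilon> | \<epsilon>. \<epsilon> > 0} \<noteq> {}"
      using zero_less_one by blast
    fix V1 V2 assume "V1 \<in> {sball (topspace X) d x \<epsilon> | \<epsilon>. \<epsilon> > 0}"
      and "V2 \<in> {sball (topspace X) d x \<epsilon> | \<epsilon>. \<epsilon> > 0}"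
    then obtain \<epsilon> \<delta> where "\<epsilon> > 0" "\<delta> > 0"
      and V12: "V1 = sball (topspace X) d x \<epsilon>" "V2 = sball (topspace X) d x \<delta>"
      by blast
    then have "sball (topspace X) d x (min \<epsilon> \<delta>) \<in> {sball (topspace X) d x \<epsilon> | \<epsilon>. \<epsilon> > 0}"
      by (intro CollectI exI[of _ "min \<epsilon> \<delta>"]) simp
    moreover have "sball (topspace X) d x (min \<epsilon> \<delta>) \<subseteq> V1 \<inter> V2"
      unfolding V12 sball_def by auto
    ultimately show "\<exists>V3 \<in> {sball (topspace X) d x \<epsilon> | \<epsilon>. \<epsilon> > 0}. V3 \<subseteq> V1 \<inter> V2"
      by blast
  qed
  fix V assume "V \<in> {sball (topspace X) d x \<epsilon> | \<epsilon>. \<epsilon> > 0}"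
  then obtain \<epsilon> where "\<epsilon> > 0" "V = sball (topspace X) d x \<epsilon>"
    by blast
  moreover have "d x x = 0"
    using d x unfolding semimetric_on_def by blast
  ultimately show "x \<in> V" "V \<subseteq> topspace X"
    using x unfolding sball_def by auto
next
  fix U assume "U \<subseteq> topspace X"
  moreover have "(\<exists>V \<in> {sball (topspace X) d y \<epsilon> | \<epsilon>. \<epsilon> > 0}. V \<subseteq> U) \<longleftrightarrow>
      (\<exists>\<epsilon>>0. sball (topspace X) d y \<epsilon> \<subseteq> U)" for y
    by blast
  ultimately show "openin X U \<longleftrightarrow>
      (\<forall>x \<in> U. \<exists>V \<in> {sball (topspace X) d x \<epsilon> | \<epsilon>. \<epsilon> > 0}. V \<subseteq> U)"
    using open_iff by simp
qed

theorem accessibility_symmetrizable_imp_semimetrizable: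
  assumes acc: "accessibility_space X" and "symmetrizable X"
  shows "semimetrizable X"
proof -
  obtain d where d: "semimetric_on (topspace X) d"
    and open_iff: "\<forall>W. W \<subseteq> topspace X \<longrightarrow>
           (openin X W \<longleftrightarrow> (\<forall>x \<in> W. \<exists>\<epsilon>>0. sball (topspace X) d x \<epsilon> \<subseteq> W))"
    using assms(2) unfolding symmetrizable_def by blast
  note closure_iff = accessibility_weak_base_closure_of[OF acc symmetrizable_balls_weak_base[OF d open_iff]]
  show ?thesis
    unfolding semimetrizable_def
  proof (intro exI[of _ d] conjI ballI allI impI)
    fix x A assume x: "x \<in> topspace X" and A: "A \<subseteq> topspace X"
    have "(\<forall>V \<in> {sball (topspace X) d x \<epsilon> | \<epsilon>. \<epsilon> > 0}. V \<inter> A \<noteq> {}) \<longleftrightarrow>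
        (\<forall>\<epsilon>>0. sball (topspace X) d x \<epsilon> \<inter> A \<noteq> {})"
      by blast
    moreover have "sball (topspace X) d x \<epsilon> \<inter> A \<noteq> {} \<longleftrightarrow> (\<exists>a \<in> A. d x a < \<epsilon>)" for \<epsilon>
      using A unfolding sball_def by blast
    ultimately show "x \<in> X closure_of A \<longleftrightarrow> (\<forall>\<epsilon>>0. \<exists>a \<in> A. d x a < \<epsilon>)"
      using closure_iff[OF x] by simp
  qed (rule d)
qed

theorem corollary4p3:
  fixes X :: "'a topology"
  assumes "accessibility_space X"
  shows "(sequential_space X \<longrightarrow> frechet_space X) \<and>
         (countable_S0_character X \<longrightarrow> first_countable X) \<and>
         (symmetrizable X \<longrightarrow> semimetrizable X)"
  using assms accessibility_sequential_imp_frechet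
    accessibility_countable_S0_character_imp_first_countable
    accessibility_symmetrizable_imp_semimetrizable
  by blast

end
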